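(* Let $\mathcal{A}=\{\alpha_1<\dots<\alpha_m\}\subset(0,1)$, $d_{\mathcal{A}}=\min_{\alpha\in\mathcal{A}}\min(\alpha,1-\alpha)$. Suppose the base forecasts are point forecasts, $b_t=[k_t,\dots,k_t]$ for some $k_t\in\mathbb{R}$, and $|y_t-k_t|\le R$ for all $t$. Then for every $\alpha\in\mathcal{A}$ and $T\ge1$, the MultiQT iterates (learning rate $\eta>0$, initial hidden offset $\tilde\theta_1\in\mathcal{K}$) satisfy $$\Bigg|\frac1T\sum_{t=1}^T\mathrm{cov}_t^{\alpha}-\alpha\Bigg|\le\frac{2\|\tilde\theta_1\|_2}{\eta T}+\frac{|\mathcal{A}|^{1/2}}{T}+\frac{|\mathcal{A}|^{3/2}}{2d_{\mathcal{A}}T}+\frac{R|\mathcal{A}|^{3/2}}{d_{\mathcal{A}}\eta T}+\frac{|\mathcal{A}|^{3/2}}{T\sqrt3}.$$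
   Context: $\mathcal{K}=\{x\in\mathbb{R}^m:x_1\le\dots\le x_m\}$; $\Pi_C$ Euclidean projection; $C-v=\{x-v:x\in C\}$. MultiQT: for $t=1,2,\dots$, $\theta_t=\Pi_{\mathcal{K}-b_t}(\tilde\theta_t)$, forecast $q_t=b_t+\theta_t$, $\mathrm{cov}_t^{\alpha}=\mathbb{1}\{y_t\le q_t^{\alpha}\}$, and $\tilde\theta_{t+1}^{\alpha}=\tilde\theta_t^{\alpha}-\eta(\mathrm{cov}_t^{\alpha}-\alpha)$ for each $\alpha\in\mathcal{A}$. *)

theory Defs
  imports "HOL-Analysis.Analysis"
begin

text \<open>Vectors in R^m are modelled as (real,'m) vec where the index type 'm is a finite
linearly ordered type (isomorphic to {1..m}); |A| = CARD('m).\<close>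

definition monoK :: "((real,'m::{finite,linorder}) vec) set" where
  "monoK = {x. \<forall>i j. i \<le> j \<longrightarrow> x $ i \<le> x $ j}"

definition shift_set :: "((real,'m::finite) vec) set \<Rightarrow> (real,'m) vec \<Rightarrow> ((real,'m) vec) set" where
  "shift_set C v = (\<lambda>x. x - v) ` C"

definition proj :: "((real,'m::finite) vec) set \<Rightarrow> (real,'m) vec \<Rightarrow> (real,'m) vec" where
  "proj C x = closest_point C x"

text \<open>MultiQT hidden offsets; mqt_hidden ... t is theta-tilde_t for t \<ge> 1
  (the value at t = 0 is an unused dummy).\<close>
definition mqt_step :: "(real,'m::{finite,linorder}) vec \<Rightarrow> real \<Rightarrow> (real,'m) vec \<Rightarrow> real
    \<Rightarrow> (real,'m) vec \<Rightarrow> (real,'m) vec" where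
  "mqt_step alpha eta bt yt th =
     (let q = bt + proj (shift_set monoK bt) th
      in th - eta *\<^sub>R (\<chi> i. (if yt \<le> q $ i then 1 else 0) - alpha $ i))"

fun mqt_hidden :: "(real,'m::{finite,linorder}) vec \<Rightarrow> real \<Rightarrow> (nat \<Rightarrow> (real,'m) vec) \<Rightarrow> (nat \<Rightarrow> real)
    \<Rightarrow> (real,'m) vec \<Rightarrow> nat \<Rightarrow> (real,'m) vec" where
  "mqt_hidden alpha eta b y th1 0 = th1"
| "mqt_hidden alpha eta b y th1 (Suc 0) = th1"
| "mqt_hidden alpha eta b y th1 (Suc (Suc n)) =
     mqt_step alpha eta (b (Suc n)) (y (Suc n)) (mqt_hidden alpha eta b y th1 (Suc n))"

definition mqt_forecast :: "(real,'m::{finite,linorder}) vec \<Rightarrow> real \<Rightarrow> (nat \<Rightarrow> (real,'m) vec) \<Rightarrow> (nat \<Rightarrow> real)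
    \<Rightarrow> (real,'m) vec \<Rightarrow> nat \<Rightarrow> (real,'m) vec" where
  "mqt_forecast alpha eta b y th1 t =
     b t + proj (shift_set monoK (b t)) (mqt_hidden alpha eta b y th1 t)"

definition mqt_cov :: "(real,'m::{finite,linorder}) vec \<Rightarrow> real \<Rightarrow> (nat \<Rightarrow> (real,'m) vec) \<Rightarrow> (nat \<Rightarrow> real)
    \<Rightarrow> (real,'m) vec \<Rightarrow> nat \<Rightarrow> 'm \<Rightarrow> real" where
  "mqt_cov alpha eta b y th1 t i =
     (if y t \<le> mqt_forecast alpha eta b y th1 t $ i then 1 else 0)"

definition dA :: "(real,'m::{finite,linorder}) vec \<Rightarrow> real" where
  "dA alpha = Min ((\<lambda>i. min (alpha $ i) (1 - alpha $ i)) ` UNIV)"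

end

theory Submission
  imports Defs
begin

(*
  For point forecasts the shifted cone K - b_t is K itself, so MultiQT is the projected
  update  \<theta>_(t+1) = \<theta>_t - \<eta> (cov_t - \<alpha>)  where cov_t indicates the coordinates
  of P_t = \<Pi>_K \<theta>_t that are at least y_t - k_t.  Summing the updates, the coverage
  error at level \<alpha>_i is (\<theta>_1 - \<theta>_(T+1))_i / (\<eta> T), so it suffices to bound the
  norm of \<theta>_t.

  First, \<theta>_t + \<eta> r stays in K for the rank vector r = (0, 1, ..., m - 1): an update can
  break monotonicity only where P_t jumps across y_t - k_t, and there \<theta>_t is not pooled
  with its neighbour, which leaves room \<eta>.  Hence \<theta>_t is within \<eta> |r| of P_t.
  Second, \<theta>_t - P_t pairs nonnegatively with the upper-set indicator cov_t and
  nonpositively with \<alpha> \<in> K, while coordinatewise P (cov - \<alpha>) \<ge> d |P| - R.  So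
  <\<theta>_t, cov_t - \<alpha>> \<ge> d |P_t| - m R, and above the threshold
  D = \<eta> m / (2 d) + m R / d + \<eta> |r| the update is a descent step.  As one step adds at
  most \<eta> |cov_t - \<alpha>| \<le> \<eta> \<surd>m, the norm of \<theta>_t never exceeds max |\<theta>_1| (D + \<eta> \<surd>m).
*)

definition coverage :: "real \<Rightarrow> (real,'m::finite) vec \<Rightarrow> (real,'m) vec" where
  "coverage z q = (\<chi> i. if z \<le> q $ i then 1 else 0)"

definition rank_vec :: "(real,'m::{finite,linorder}) vec" where
  "rank_vec = (\<chi> i. real (card {k. k < i}))"

lemma closed_monoK: "closed (monoK :: (real,'m::{finite,linorder}) vec set)"
  unfolding monoK_def
  by (intro closed_Collect_all closed_Collect_imp open_Collect_const closed_Collect_le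
      continuous_intros)

lemma convex_monoK: "convex (monoK :: (real,'m::{finite,linorder}) vec set)"
  unfolding convex_def monoK_def by (auto intro!: add_mono mult_left_mono)

lemma zero_in_monoK: "0 \<in> monoK"
  by (simp add: monoK_def)

lemma add_in_monoK: "x \<in> monoK \<Longrightarrow> y \<in> monoK \<Longrightarrow> x + y \<in> monoK"
  by (auto simp: monoK_def intro: add_mono)

lemma scaleR_in_monoK: "0 \<le> c \<Longrightarrow> x \<in> monoK \<Longrightarrow> c *\<^sub>R x \<in> monoK"
  by (auto simp: monoK_def intro: mult_left_mono)

lemma shift_set_monoK_const:
  "shift_set monoK (\<chi> j. c) = (monoK :: (real,'m::{finite,linorder}) vec set)"
proof -
  have "x + (\<chi> j. c) \<in> monoK" if "x \<in> monoK" for x :: "(real,'m) vec"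
    using that by (simp add: monoK_def)
  then have "monoK \<subseteq> (\<lambda>x. x - (\<chi> j. c)) ` (monoK :: (real,'m) vec set)"
    by (auto intro!: image_eqI[where x = "_ + (\<chi> j. c)"])
  then show ?thesis
    unfolding shift_set_def by (auto simp: monoK_def)
qed

lemma closest_point_monoK_in:
  fixes H :: "(real,'m::{finite,linorder}) vec"
  shows "closest_point monoK H \<in> monoK"
  using closest_point_in_set[OF closed_monoK] zero_in_monoK by blast

lemma closest_point_monoK_le:
  fixes H :: "(real,'m::{finite,linorder}) vec"
  shows "i \<le> j \<Longrightarrow> closest_point monoK H $ i \<le> closest_point monoK H $ j"
  using closest_point_monoK_in by (auto simp: monoK_def)

lemma closest_point_monoK_dot:
  fixes H x :: "(real,'m::{finite,linorder}) vec"
  shows "x \<in> monoK \<Longrightarrow> inner (H - closest_point monoK H) (x - closest_point monoK H) \<le> 0"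
  by (rule closest_point_dot[OF convex_monoK closed_monoK])

lemma closest_point_monoK_polar:
  fixes H x :: "(real,'m::{finite,linorder}) vec"
  assumes "x \<in> monoK"
  shows "inner (H - closest_point monoK H) x \<le> 0"
proof -
  have "closest_point monoK H + x \<in> monoK"
    by (rule add_in_monoK[OF closest_point_monoK_in assms])
  from closest_point_monoK_dot[where H = H, OF this] show ?thesis by simp
qed

lemma closest_point_monoK_coverage:
  fixes H :: "(real,'m::{finite,linorder}) vec"
  defines "P \<equiv> closest_point monoK H"
  shows "0 \<le> inner (H - P) (coverage z P)"
proof -
  \<comment> \<open>lowering the upper level set of P by less than its smallest jump stays in K\<close>
  define gaps where "gaps = {P$j - P$i | i j. P$i < z \<and> z \<le> P$j}"
  define e where "e = Min (insert 1 gaps)"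
  have "finite gaps"
    unfolding gaps_def by (rule finite_subset[of _ "(\<lambda>(i, j). P$j - P$i) ` UNIV"]) auto
  then have "0 < e"
    unfolding e_def gaps_def by auto
  have e_le: "e \<le> P$j - P$i" if "P$i < z" "z \<le> P$j" for i j
    unfolding e_def using \<open>finite gaps\<close> that by (intro Min_le) (auto simp: gaps_def)
  have "P - e *\<^sub>R coverage z P \<in> monoK"
    unfolding monoK_def
  proof (intro CollectI allI impI)
    fix i j :: 'm
    assume "i \<le> j"
    then show "(P - e *\<^sub>R coverage z P) $ i \<le> (P - e *\<^sub>R coverage z P) $ j"
      using closest_point_monoK_le[of i j H] e_le[of i j] \<open>0 < e\<close>
      by (auto simp: coverage_def P_def)
  qed
  from closest_point_monoK_dot[where H = H, OF this[unfolded P_def]]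
  have "0 \<le> e * inner (H - P) (coverage z P)"
    by (simp add: P_def)
  with \<open>0 < e\<close> show ?thesis
    by (simp add: zero_le_mult_iff)
qed

lemma closest_point_monoK_coord:
  fixes H x :: "(real,'m::{finite,linorder}) vec"
  defines "P \<equiv> closest_point monoK H"
  assumes "x \<in> monoK" and "\<And>k. k \<noteq> a \<Longrightarrow> x $ k = P $ k"
  shows "(H$a - P$a) * (x$a - P$a) \<le> 0"
proof -
  have "inner (H - P) (x - P) = (H$a - P$a) * (x$a - P$a)"
    unfolding inner_vec_def using assms(3)
    by (simp add: sum.remove[OF finite UNIV_I[of a]])
  with closest_point_monoK_dot[OF assms(2), of H] show ?thesis
    by (simp add: P_def)
qed

lemma closest_point_monoK_cut:
  fixes H :: "(real,'m::{finite,linorder}) vec"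
  defines "P \<equiv> closest_point monoK H"
  assumes gap: "P$a < P$b" and succ: "\<And>k. k \<le> a \<longleftrightarrow> k < b"
  shows "H$a \<le> P$a" and "P$b \<le> H$b"
proof -
  have mono: "k \<le> l \<Longrightarrow> P$k \<le> P$l" for k l
    unfolding P_def by (rule closest_point_monoK_le)
  have after_a: "P$b \<le> P$l" if "a < l" for l
    using succ[of l] that by (intro mono) auto
  have before_b: "P$k \<le> P$a" if "k < b" for k
    using succ[of k] that by (intro mono) auto
  have "(\<chi> k. if k = a then P$b else P$k) \<in> monoK"
    unfolding monoK_def
  proof (intro CollectI allI impI)
    fix k l :: 'm
    assume "k \<le> l"
    then show "(\<chi> k. if k = a then P$b else P$k) $ k \<le> (\<chi> k. if k = a then P$b else P$k) $ l"
      using mono[of k a] after_a[of l] mono[of k l] gap by (cases "k = a"; cases "l = a") auto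
  qed
  from closest_point_monoK_coord[where H = H and a = a, OF this[unfolded P_def]]
  show "H$a \<le> P$a"
    using gap by (simp add: P_def mult_le_0_iff)
  have "(\<chi> k. if k = b then P$a else P$k) \<in> monoK"
    unfolding monoK_def
  proof (intro CollectI allI impI)
    fix k l :: 'm
    assume "k \<le> l"
    then show "(\<chi> k. if k = b then P$a else P$k) $ k \<le> (\<chi> k. if k = b then P$a else P$k) $ l"
      using mono[of b l] before_b[of k] mono[of k l] gap by (cases "k = b"; cases "l = b") auto
  qed
  from closest_point_monoK_coord[where H = H and a = b, OF this[unfolded P_def]]
  show "P$b \<le> H$b"
    using gap by (simp add: P_def mult_le_0_iff)
qed

lemma monoK_threshold_cut:
  fixes P :: "(real,'m::{finite,linorder}) vec"
  assumes "P \<in> monoK" "P$i < z" "z \<le> P$j"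
  obtains a b where "\<And>k. P$k < z \<longleftrightarrow> k \<le> a" and "\<And>k. k \<le> a \<longleftrightarrow> k < b"
proof -
  define a where "a = Max {k. P$k < z}"
  define b where "b = Min {k. z \<le> P$k}"
  have mono: "k \<le> l \<Longrightarrow> P$k \<le> P$l" for k l
    using assms(1) by (simp add: monoK_def)
  have "a \<in> {k. P$k < z}"
    unfolding a_def using assms(2) by (intro Max_in) auto
  then have "P$a < z" by simp
  have "b \<in> {k. z \<le> P$k}"
    unfolding b_def using assms(3) by (intro Min_in) auto
  then have "z \<le> P$b" by simp
  have below_a: "P$k < z \<longleftrightarrow> k \<le> a" for k
  proof
    show "P$k < z \<Longrightarrow> k \<le> a"
      unfolding a_def by (intro Max_ge) auto
    show "k \<le> a \<Longrightarrow> P$k < z"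
      using mono[of k a] \<open>P$a < z\<close> by linarith
  qed
  have "P$k < z \<longleftrightarrow> k < b" for k
  proof
    show "P$k < z \<Longrightarrow> k < b"
      using mono[of b k] \<open>z \<le> P$b\<close> by (meson leI less_le_trans not_less)
    have "z \<le> P$k \<Longrightarrow> b \<le> k"
      unfolding b_def by (intro Min_le) auto
    then show "k < b \<Longrightarrow> P$k < z"
      by (meson not_less)
  qed
  with below_a show thesis
    using that by blast
qed

lemma rank_vec_in_monoK: "rank_vec \<in> monoK"
  unfolding monoK_def rank_vec_def by (auto intro!: card_mono)

lemma rank_vec_succ:
  assumes "\<And>k. k \<le> a \<longleftrightarrow> k < b"
  shows "rank_vec $ b = rank_vec $ a + 1"
proof -
  have "{k. k < b} = insert a {k. k < a}"
    using assms by (auto simp: order.order_iff_strict)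
  then show ?thesis
    by (simp add: rank_vec_def)
qed

lemma closest_point_monoK_gap:
  fixes H :: "(real,'m::{finite,linorder}) vec" and eta :: real
  defines "P \<equiv> closest_point monoK H" and "Y \<equiv> H + eta *\<^sub>R rank_vec"
  assumes "Y \<in> monoK" and "P$i < z" and "z \<le> P$j"
  shows "eta \<le> Y$j - Y$i"
proof -
  obtain a b where below_a: "\<And>k. P$k < z \<longleftrightarrow> k \<le> a" and succ: "\<And>k. k \<le> a \<longleftrightarrow> k < b"
    using monoK_threshold_cut[OF closest_point_monoK_in assms(4,5)[unfolded P_def]]
    unfolding P_def by blast
  have gap: "P$a < P$b"
    using below_a[of a] below_a[of b] succ[of b] by auto
  then have "H$a \<le> P$a" "P$b \<le> H$b"
    using closest_point_monoK_cut[of H a b, OF _ succ] by (auto simp: P_def)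
  moreover have "rank_vec $ b = rank_vec $ a + 1"
    by (rule rank_vec_succ[OF succ])
  moreover have "Y$i \<le> Y$a" "Y$b \<le> Y$j"
    using assms(3-5) below_a[of i] below_a[of j] succ[of j] by (auto simp: monoK_def)
  ultimately show ?thesis
    using gap unfolding Y_def by (simp add: algebra_simps)
qed

lemma monoK_rank_shift_preserved:
  fixes H alpha :: "(real,'m::{finite,linorder}) vec"
  defines "P \<equiv> closest_point monoK H"
  assumes "H + eta *\<^sub>R rank_vec \<in> monoK" and "alpha \<in> monoK" and "0 \<le> eta"
  shows "(H - eta *\<^sub>R (coverage z P - alpha)) + eta *\<^sub>R rank_vec \<in> monoK"
  unfolding monoK_def
proof (intro CollectI allI impI)
  fix i j :: 'm
  assume "i \<le> j"
  let ?Y = "H + eta *\<^sub>R rank_vec"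
  have "?Y$i \<le> ?Y$j" and "eta * alpha$i \<le> eta * alpha$j"
    using assms(2,3) \<open>i \<le> j\<close> \<open>0 \<le> eta\<close> by (auto simp: monoK_def intro: mult_left_mono)
  moreover have "eta \<le> ?Y$j - ?Y$i" if "P$i < z" "z \<le> P$j"
    using closest_point_monoK_gap[OF assms(2) that[unfolded P_def]] .
  ultimately show "((H - eta *\<^sub>R (coverage z P - alpha)) + eta *\<^sub>R rank_vec) $ i
      \<le> ((H - eta *\<^sub>R (coverage z P - alpha)) + eta *\<^sub>R rank_vec) $ j"
    using \<open>0 \<le> eta\<close> by (cases "z \<le> P$i"; cases "z \<le> P$j")
      (simp_all add: coverage_def right_diff_distrib)
qed

lemma coverage_coord_lower_bound:
  fixes p z a d R :: real
  assumes "\<bar>z\<bar> \<le> R" and "0 \<le> d" and "d \<le> a" and "d \<le> 1 - a"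
  shows "d * \<bar>p\<bar> - R \<le> p * ((if z \<le> p then 1 else 0) - a)"
proof (cases "0 \<le> p")
  case True
  have "p * d \<le> p * (1 - a)" and "p * (a + d) \<le> p * 1"
    using mult_left_mono[OF assms(4) True] mult_left_mono[of "a + d" 1 p] assms(4) True
    by simp_all
  with True assms(1) show ?thesis
    by (auto simp: algebra_simps)
next
  case False
  have "a * p \<le> d * p"
    using mult_right_mono_neg[OF assms(3)] False by simp
  show ?thesis
    using False assms(1)
    by (cases "z \<le> p"; simp add: algebra_simps; use \<open>a * p \<le> d * p\<close> in linarith)
qed

lemma inner_coverage_lower_bound:
  fixes H alpha :: "(real,'m::{finite,linorder}) vec"
  defines "P \<equiv> closest_point monoK H"
  assumes alpha: "alpha \<in> monoK" and d: "0 \<le> d" "\<And>i. d \<le> alpha$i \<and> d \<le> 1 - alpha$i"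
    and z: "\<bar>z\<bar> \<le> R"
  shows "d * norm P - real CARD('m) * R \<le> inner H (coverage z P - alpha)"
proof -
  have "d * norm P - real CARD('m) * R \<le> (\<Sum>i\<in>UNIV. d * \<bar>P$i\<bar> - R)"
    using mult_left_mono[OF norm_le_l1_cart[of P] d(1)]
    by (simp add: sum_subtractf sum_distrib_left)
  also have "\<dots> \<le> inner P (coverage z P - alpha)"
    unfolding inner_vec_def
    by (intro sum_mono) (use coverage_coord_lower_bound[OF z d(1)] d(2) in \<open>simp add: coverage_def\<close>)
  also have "\<dots> \<le> inner P (coverage z P - alpha) + inner (H - P) (coverage z P) - inner (H - P) alpha"
    using closest_point_monoK_coverage[of H z] closest_point_monoK_polar[OF alpha, of H]
    by (simp add: P_def)
  also have "\<dots> = inner H (coverage z P - alpha)"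
    by (simp add: inner_diff_left inner_diff_right)
  finally show ?thesis .
qed

lemma norm_coverage_diff_le:
  fixes alpha q :: "(real,'m::finite) vec"
  assumes "\<And>i. 0 \<le> alpha$i \<and> alpha$i \<le> 1"
  shows "norm (coverage z q - alpha) \<le> sqrt (real CARD('m))"
proof -
  have "norm (coverage z q - alpha) \<le> norm (\<chi> i::'m. (1::real))"
    using assms by (intro norm_le_componentwise_cart) (auto simp: coverage_def)
  also have "\<dots> = sqrt (real CARD('m))"
    by (simp add: norm_vec_def L2_set_def)
  finally show ?thesis .
qed

lemma norm_diff_closest_point_monoK_le:
  fixes H :: "(real,'m::{finite,linorder}) vec"
  assumes "H + eta *\<^sub>R rank_vec \<in> monoK" and "0 \<le> eta"
  shows "norm (H - closest_point monoK H) \<le> eta * norm (rank_vec :: (real,'m) vec)"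
  using closest_point_le[OF closed_monoK assms(1), where a = H] assms(2) by (simp add: dist_norm)

lemma norm_diff_scaleR_le:
  fixes x g :: "'a::real_inner"
  assumes "0 \<le> eta" and "eta * (norm g)\<^sup>2 \<le> 2 * inner x g"
  shows "norm (x - eta *\<^sub>R g) \<le> norm x"
proof -
  have "(norm (x - eta *\<^sub>R g))\<^sup>2 = (norm x)\<^sup>2 - eta * (2 * inner x g - eta * (norm g)\<^sup>2)"
    unfolding power2_norm_eq_inner
    by (simp add: inner_diff_left inner_diff_right inner_commute algebra_simps)
  also have "\<dots> \<le> (norm x)\<^sup>2"
    using assms by simp
  finally show ?thesis
    by (rule power2_le_imp_le) simp
qed

lemma sum_squares_lessThan_le: "(\<Sum>j<n. (real j)\<^sup>2) \<le> real n ^ 3 / 3"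
  by (induction n) (simp_all add: power2_eq_square power3_eq_cube algebra_simps)

lemma norm_rank_vec_le:
  "norm (rank_vec :: (real,'m::{finite,linorder}) vec) \<le> real CARD('m) powr (3/2) / sqrt 3"
proof -
  let ?r = "\<lambda>i::'m. card {k. k < i}"
  have "strict_mono ?r"
    by (intro strict_monoI psubset_card_mono) auto
  then have "inj ?r"
    by (rule strict_mono_imp_inj_on)
  have "?r i < CARD('m)" for i
    by (intro psubset_card_mono) auto
  then have "range ?r \<subseteq> {..<CARD('m)}"
    by auto
  have "(norm (rank_vec :: (real,'m) vec))\<^sup>2 = (\<Sum>i\<in>UNIV. (real (?r i))\<^sup>2)"
    by (simp add: norm_vec_def L2_set_def rank_vec_def sum_nonneg)
  also have "\<dots> = (\<Sum>j\<in>range ?r. (real j)\<^sup>2)"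
    using sum.reindex[OF \<open>inj ?r\<close>, of "\<lambda>j. (real j)\<^sup>2"] by simp
  also have "\<dots> \<le> (\<Sum>j<CARD('m). (real j)\<^sup>2)"
    by (rule sum_mono2) (use \<open>range ?r \<subseteq> {..<CARD('m)}\<close> in auto)
  also have "\<dots> \<le> real CARD('m) ^ 3 / 3"
    by (rule sum_squares_lessThan_le)
  finally have "norm (rank_vec :: (real,'m) vec) \<le> sqrt (real CARD('m) ^ 3 / 3)"
    by (rule real_le_rsqrt)
  also have "\<dots> = real CARD('m) powr (3/2) / sqrt 3"
    using powr_half_sqrt_powr[of "real CARD('m)" 3]
    by (simp add: real_sqrt_divide powr_realpow)
  finally show ?thesis .
qed

lemma norm_update_le_if_large:
  fixes H alpha :: "(real,'m::{finite,linorder}) vec" and z :: real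
  defines "P \<equiv> closest_point monoK H" and "m \<equiv> real CARD('m)"
    and "g \<equiv> coverage z (closest_point monoK H) - alpha"
  assumes Y: "H + eta *\<^sub>R rank_vec \<in> monoK" and eta: "0 \<le> eta" and alpha: "alpha \<in> monoK"
    and d: "0 < d" "\<And>i. d \<le> alpha$i \<and> d \<le> 1 - alpha$i" and z: "\<bar>z\<bar> \<le> R"
    and large: "eta * m / (2 * d) + m * R / d + eta * norm (rank_vec :: (real,'m) vec) \<le> norm H"
  shows "norm (H - eta *\<^sub>R g) \<le> norm H"
proof (rule norm_diff_scaleR_le[OF eta])
  have "norm H \<le> norm P + eta * norm (rank_vec :: (real,'m) vec)"
    using norm_triangle_ineq[of P "H - P"] norm_diff_closest_point_monoK_le[OF Y eta]
    by (simp add: P_def)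
  with large have P_large: "eta * m / (2 * d) + m * R / d \<le> norm P"
    by linarith
  have "eta * m / 2 + m * R = d * (eta * m / (2 * d) + m * R / d)"
    using d(1) by (simp add: field_simps)
  also have "\<dots> \<le> d * norm P"
    using mult_left_mono[OF P_large] d(1) by simp
  also have "\<dots> - m * R \<le> inner H g"
    using inner_coverage_lower_bound[OF alpha _ d(2) z, of H] d(1) by (simp add: P_def g_def m_def)
  finally have inner_large: "eta * m \<le> 2 * inner H g"
    by simp
  have "0 \<le> alpha$i \<and> alpha$i \<le> 1" for i
    using d(1) d(2)[of i] by linarith
  then have "norm g \<le> sqrt m"
    unfolding g_def m_def by (rule norm_coverage_diff_le)
  then have "(norm g)\<^sup>2 \<le> m"
    using sqrt_ge_absD[of "norm g" m] by simp
  with inner_large show "eta * (norm g)\<^sup>2 \<le> 2 * inner H g"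
    using mult_left_mono[OF _ eta, of "(norm g)\<^sup>2" m] by linarith
qed

lemma bounded_by_drift:
  fixes f :: "nat \<Rightarrow> real"
  assumes increment: "\<And>t. 1 \<le> t \<Longrightarrow> f (Suc t) \<le> f t + s"
    and drift: "\<And>t. 1 \<le> t \<Longrightarrow> D \<le> f t \<Longrightarrow> f (Suc t) \<le> f t"
    and "1 \<le> t"
  shows "f t \<le> max (f 1) (D + s)"
  using \<open>1 \<le> t\<close>
proof (induction t rule: dec_induct)
  case (step t)
  show ?case
  proof (cases "D \<le> f t")
    case True
    with drift[OF step.hyps(1)] step.IH show ?thesis
      by linarith
  next
    case False
    with increment[OF step.hyps(1)] show ?thesis
      by linarith
  qed
qed simp

lemma projected_update_rank_invariant:
  fixes H :: "nat \<Rightarrow> (real,'m::{finite,linorder}) vec" and alpha :: "(real,'m) vec"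
  assumes update: "\<And>t. 1 \<le> t \<Longrightarrow>
      H (Suc t) = H t - eta *\<^sub>R (coverage (z t) (closest_point monoK (H t)) - alpha)"
    and init: "H 1 \<in> monoK" and eta: "0 \<le> eta" and alpha: "alpha \<in> monoK"
    and "1 \<le> t"
  shows "H t + eta *\<^sub>R rank_vec \<in> monoK"
  using \<open>1 \<le> t\<close>
proof (induction t rule: dec_induct)
  case base
  show ?case
    by (rule add_in_monoK[OF init scaleR_in_monoK[OF eta rank_vec_in_monoK]])
next
  case (step t)
  then show ?case
    using monoK_rank_shift_preserved[OF _ alpha eta] update by simp
qed

lemma projected_update_norm_le:
  fixes H :: "nat \<Rightarrow> (real,'m::{finite,linorder}) vec" and alpha :: "(real,'m) vec"
  defines "m \<equiv> real CARD('m)"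
  assumes update: "\<And>t. 1 \<le> t \<Longrightarrow>
      H (Suc t) = H t - eta *\<^sub>R (coverage (z t) (closest_point monoK (H t)) - alpha)"
    and init: "H 1 \<in> monoK" and eta: "0 \<le> eta" and alpha: "alpha \<in> monoK"
    and d: "0 < d" "\<And>i. d \<le> alpha$i \<and> d \<le> 1 - alpha$i" and z: "\<And>t. 1 \<le> t \<Longrightarrow> \<bar>z t\<bar> \<le> R"
    and "1 \<le> t"
  shows "norm (H t) \<le> norm (H 1) + eta * sqrt m
    + eta * m powr (3/2) / (2 * d) + R * m powr (3/2) / d + eta * m powr (3/2) / sqrt 3"
proof -
  define D where "D = eta * m / (2 * d) + m * R / d + eta * norm (rank_vec :: (real,'m) vec)"
  have "0 \<le> alpha$i \<and> alpha$i \<le> 1" for i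
    using d(1) d(2)[of i] by linarith
  then have g_le: "norm (coverage (z t) (closest_point monoK (H t)) - alpha) \<le> sqrt m" for t
    unfolding m_def by (rule norm_coverage_diff_le)
  have increment: "norm (H (Suc t)) \<le> norm (H t) + eta * sqrt m" if "1 \<le> t" for t
    using norm_triangle_ineq4[of "H t" "eta *\<^sub>R (coverage (z t) (closest_point monoK (H t)) - alpha)"]
      mult_left_mono[OF g_le[of t] eta] eta
    unfolding update[OF that] by simp
  have drift: "norm (H (Suc t)) \<le> norm (H t)" if "1 \<le> t" "D \<le> norm (H t)" for t
    using norm_update_le_if_large[OF projected_update_rank_invariant[OF update init eta alpha that(1)]
        eta alpha d z[OF that(1)]] that(2)
    by (simp add: update[OF that(1)] D_def m_def)
  have "0 \<le> R"
    using z[of 1] by simp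
  have "m \<le> m powr (3/2)"
    using powr_mono[of 1 "3/2" m] by (simp add: m_def)
  then have "eta * m / (2 * d) \<le> eta * m powr (3/2) / (2 * d)" and "m * R / d \<le> R * m powr (3/2) / d"
    using eta d(1) \<open>0 \<le> R\<close> by (simp_all add: divide_right_mono mult_left_mono mult.commute)
  moreover have "eta * norm (rank_vec :: (real,'m) vec) \<le> eta * m powr (3/2) / sqrt 3"
    using mult_left_mono[OF norm_rank_vec_le[where 'm = 'm] eta] by (simp add: m_def)
  moreover have "0 \<le> D"
    unfolding D_def m_def using eta d(1) \<open>0 \<le> R\<close> by simp
  then have "max (norm (H 1)) (D + eta * sqrt m) \<le> norm (H 1) + D + eta * sqrt m"
    using eta by (simp add: max_def m_def)
  moreover have "norm (H t) \<le> max (norm (H 1)) (D + eta * sqrt m)"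
    using bounded_by_drift[where f = "\<lambda>t. norm (H t)", OF increment drift \<open>1 \<le> t\<close>] .
  ultimately show ?thesis
    unfolding D_def by linarith
qed

lemma average_error_eq_by_telescoping:
  fixes x c :: "nat \<Rightarrow> real"
  assumes update: "\<And>t. 1 \<le> t \<Longrightarrow> x (Suc t) = x t - eta * (c t - a)"
    and "eta \<noteq> 0" and "1 \<le> T"
  shows "(1 / real T) * (\<Sum>t = 1..T. c t) - a = (x 1 - x (Suc T)) / (eta * real T)"
proof -
  have sum_eq: "(\<Sum>t = 1..n. c t) = real n * a + (x 1 - x (Suc n)) / eta" for n
  proof (induction n)
    case (Suc n)
    then show ?case
      using update[of "Suc n"] \<open>eta \<noteq> 0\<close> by (simp add: field_simps)
  qed simp
  show ?thesis
    unfolding sum_eq using \<open>eta \<noteq> 0\<close> \<open>1 \<le> T\<close> by (simp add: field_simps)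
qed

lemma dA_le: "dA alpha \<le> alpha $ i \<and> dA alpha \<le> 1 - alpha $ i"
proof -
  have "dA alpha \<le> min (alpha $ i) (1 - alpha $ i)"
    unfolding dA_def by (rule Min_le) auto
  then show ?thesis
    by simp
qed

lemma dA_pos:
  assumes "\<And>i. 0 < alpha $ i \<and> alpha $ i < 1"
  shows "0 < dA alpha"
  unfolding dA_def using assms by simp

lemma mqt_hidden_Suc:
  "1 \<le> t \<Longrightarrow>
    mqt_hidden alpha eta b y th1 (Suc t) = mqt_step alpha eta (b t) (y t) (mqt_hidden alpha eta b y th1 t)"
  by (cases t) auto

lemma mqt_step_point_forecast:
  "mqt_step alpha eta (\<chi> j. k) yt H = H - eta *\<^sub>R (coverage (yt - k) (closest_point monoK H) - alpha)"
  by (simp add: mqt_step_def proj_def shift_set_monoK_const coverage_def vec_eq_iff add.commute)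

lemma mqt_cov_point_forecast:
  "b t = (\<chi> j. k) \<Longrightarrow> mqt_cov alpha eta b y th1 t i
    = coverage (y t - k) (closest_point monoK (mqt_hidden alpha eta b y th1 t)) $ i"
  by (simp add: mqt_cov_def mqt_forecast_def proj_def shift_set_monoK_const coverage_def add.commute)

theorem corollary1:
  fixes alpha :: "(real,'m::{finite,linorder}) vec"
    and eta R :: real and k y :: "nat \<Rightarrow> real" and b :: "nat \<Rightarrow> (real,'m) vec"
    and th1 :: "(real,'m) vec" and i :: 'm and T :: nat
  assumes alpha_mono: "\<And>i j. i < j \<Longrightarrow> alpha $ i < alpha $ j"
    and alpha_range: "\<And>i. 0 < alpha $ i \<and> alpha $ i < 1"
    and point: "\<And>t. t \<ge> 1 \<Longrightarrow> b t = (\<chi> j. k t)"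
    and bounded: "\<And>t. t \<ge> 1 \<Longrightarrow> \<bar>y t - k t\<bar> \<le> R"
    and eta: "eta > 0"
    and init: "th1 \<in> monoK"
    and T: "T \<ge> 1"
  shows "\<bar>(1 / real T) * (\<Sum>t = 1..T. mqt_cov alpha eta b y th1 t i) - alpha $ i\<bar>
     \<le> 2 * norm th1 / (eta * real T)
       + sqrt (real CARD('m)) / real T
       + real CARD('m) powr (3/2) / (2 * dA alpha * real T)
       + R * real CARD('m) powr (3/2) / (dA alpha * eta * real T)
       + real CARD('m) powr (3/2) / (real T * sqrt 3)"
proof -
  define H where "H t = mqt_hidden alpha eta b y th1 t" for t
  define c where "c t = coverage (y t - k t) (closest_point monoK (H t))" for t
  define m where "m = real CARD('m)"
  have update: "H (Suc t) = H t - eta *\<^sub>R (c t - alpha)" if "1 \<le> t" for t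
    by (simp add: H_def c_def mqt_hidden_Suc[OF that] point[OF that] mqt_step_point_forecast)
  have alpha: "alpha \<in> monoK"
    using alpha_mono by (auto simp: monoK_def order.order_iff_strict)
  have d: "0 < dA alpha" "\<And>j. dA alpha \<le> alpha $ j \<and> dA alpha \<le> 1 - alpha $ j"
    using dA_pos[OF alpha_range] dA_le by auto
  have "(\<Sum>t = 1..T. mqt_cov alpha eta b y th1 t i) = (\<Sum>t = 1..T. c t $ i)"
    by (intro sum.cong) (simp_all add: mqt_cov_point_forecast point H_def c_def)
  then have "\<bar>(1 / real T) * (\<Sum>t = 1..T. mqt_cov alpha eta b y th1 t i) - alpha $ i\<bar>
      = \<bar>th1 $ i - H (Suc T) $ i\<bar> / (eta * real T)"
    using average_error_eq_by_telescoping[of "\<lambda>t. H t $ i" eta "\<lambda>t. c t $ i", OF _ _ T] update eta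
    by (simp add: H_def abs_divide)
  also have "\<dots> \<le> (norm th1 + norm (H (Suc T))) / (eta * real T)"
    using component_le_norm_cart[of th1 i] component_le_norm_cart[of "H (Suc T)" i] eta
    by (intro divide_right_mono) simp_all
  also have "\<dots> \<le> (2 * norm th1 + eta * sqrt m + eta * m powr (3/2) / (2 * dA alpha)
      + R * m powr (3/2) / dA alpha + eta * m powr (3/2) / sqrt 3) / (eta * real T)"
    using projected_update_norm_le[where z = "\<lambda>t. y t - k t" and t = "Suc T",
        OF update[unfolded c_def] _ _ alpha d bounded] init eta
    by (intro divide_right_mono) (simp_all add: H_def m_def)
  also have "\<dots> = 2 * norm th1 / (eta * real T) + sqrt m / real T + m powr (3/2) / (2 * dA alpha * real T)
      + R * m powr (3/2) / (dA alpha * eta * real T) + m powr (3/2) / (real T * sqrt 3)"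
    using eta T d(1) by (simp add: field_simps)
  finally show ?thesis
    by (simp add: m_def)
qed

end
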